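(* Let $F$ be a Ferrers diagram and $G=G(F)$. For $c,c'\in\mathsf{Rec}^{\mathsf{min}}(G)$ we have $\mathsf{CanonTop}(c)=\mathsf{CanonTop}(c')$ if and only if $c=c'$.
   Context: Ferrers diagrams and graphs: a Ferrers diagram $F$ (English convention) of semiperimeter $n+1$ has rows and columns labeled by $0,\ldots,n$: the $n+1$ unit steps of its south-east boundary path, traversed from top-right to bottom-left, are labeled $0,1,\ldots,n$; a vertical step labels the row it bounds, a horizontal step the column it bounds (top row labeled $0$). $\mathsf{rows}(F)$, $\mathsf{cols}(F)$ are the row/column label sets; they partition $\{0,\ldots,n\}$, and $F$ has a cell in row $i$, column $j$ iff $i<j$. $G(F)$ has vertex set $\{0,\ldots,n\}$ with an edge between $i\in\mathsf{rows}(F)$ and $j\in\mathsf{cols}(F)$ iff $i<j$. Sandpile model with sink $0$: configurations $c\in\mathbb{N}^n$; non-sink $v$ unstable if $c_v\ge \deg(v)$; toppling $v$ sends one grain to each neighbour (grains sent to $0$ disappear); toppling the sink adds a grain to each of its neighbours. Recurrent configurations: stable configurations obtainable from the maximal stable configuration ($c_v=\deg(v)-1$) by adding grains and stabilizing; $\mathsf{Rec}(G)$ is their set and $\mathsf{Rec}^{\mathsf{min}}(G)$ the set of recurrent configurations with minimal total number of grains. Canonical toppling: for $c\in\mathsf{Rec}(G(F))$, starting from $c$ topple the sink ($U^{(0)}_c=\{0\}$), then alternately topple simultaneously all unstable vertices in $\mathsf{cols}(F)$ ($V^{(1)}_c$), all unstable vertices in $\mathsf{rows}(F)$ ($U^{(1)}_c$),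 all unstable in $\mathsf{cols}(F)$ ($V^{(2)}_c$), etc.; each vertex topples exactly once, and $\mathsf{CanonTop}(c)=(U^{(0)}_c,V^{(1)}_c,U^{(1)}_c,\ldots)$ is the resulting ordered set partition of $\{0,\ldots,n\}$. *)

theory Defs
  imports Main
begin

text \<open>A Ferrers diagram is given by its list of row lengths (top to bottom),
  a nonempty weakly decreasing list of positive integers.\<close>
definition ferrers :: "nat list \<Rightarrow> bool" where
  "ferrers lam \<longleftrightarrow> lam \<noteq> [] \<and> sorted (rev lam) \<and> (\<forall>x\<in>set lam. 0 < x)"

text \<open>Semiperimeter is length + first row length = N + 1; labels are 0..N.\<close>
definition NF :: "nat list \<Rightarrow> nat" where
  "NF lam = length lam + hd lam - 1"

text \<open>Row i (0-indexed from the top) is bounded by the vertical step preceded by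
  i vertical steps and (hd lam - lam!i) horizontal steps of the boundary path.\<close>
definition rowsF :: "nat list \<Rightarrow> nat set" where
  "rowsF lam = {i + (hd lam - lam ! i) | i. i < length lam}"

definition colsF :: "nat list \<Rightarrow> nat set" where
  "colsF lam = {0..NF lam} - rowsF lam"

definition adjF :: "nat list \<Rightarrow> nat \<Rightarrow> nat \<Rightarrow> bool" where
  "adjF lam u v \<longleftrightarrow>
     (u \<in> rowsF lam \<and> v \<in> colsF lam \<and> u < v) \<or> (v \<in> rowsF lam \<and> u \<in> colsF lam \<and> v < u)"

definition degF :: "nat list \<Rightarrow> nat \<Rightarrow> nat" where
  "degF lam v = card {u \<in> {0..NF lam}. adjF lam u v}"

text \<open>Configurations are functions on the non-sink vertices 1..N, encoded as
  functions nat => nat vanishing outside {1..N}.\<close>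
definition is_config :: "nat list \<Rightarrow> (nat \<Rightarrow> nat) \<Rightarrow> bool" where
  "is_config lam c \<longleftrightarrow> (\<forall>v. v \<notin> {1..NF lam} \<longrightarrow> c v = 0)"

definition stable :: "nat list \<Rightarrow> (nat \<Rightarrow> nat) \<Rightarrow> bool" where
  "stable lam c \<longleftrightarrow> (\<forall>v\<in>{1..NF lam}. c v < degF lam v)"

definition unstable_at :: "nat list \<Rightarrow> (nat \<Rightarrow> nat) \<Rightarrow> nat \<Rightarrow> bool" where
  "unstable_at lam c v \<longleftrightarrow> v \<in> {1..NF lam} \<and> degF lam v \<le> c v"

text \<open>Simultaneous toppling of a set S of vertices (each topples once).
  Grains sent to the sink disappear.  If S contains the sink, this is the sink toppling.\<close>
definition topple_set :: "nat list \<Rightarrow> nat set \<Rightarrow> (nat \<Rightarrow> nat) \<Rightarrow> (nat \<Rightarrow> nat)" where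
  "topple_set lam S c = (\<lambda>u. if u \<in> {1..NF lam}
      then (c u + card {v \<in> S. adjF lam v u}) - (if u \<in> S then degF lam u else 0)
      else 0)"

definition legal_step :: "nat list \<Rightarrow> (nat \<Rightarrow> nat) \<Rightarrow> (nat \<Rightarrow> nat) \<Rightarrow> bool" where
  "legal_step lam c d \<longleftrightarrow> (\<exists>v. unstable_at lam c v \<and> d = topple_set lam {v} c)"

definition cmax :: "nat list \<Rightarrow> nat \<Rightarrow> nat" where
  "cmax lam = (\<lambda>v. if v \<in> {1..NF lam} then degF lam v - 1 else 0)"

definition Rec :: "nat list \<Rightarrow> (nat \<Rightarrow> nat) set" where
  "Rec lam = {c. is_config lam c \<and> stable lam c \<and>
      (\<exists>a. is_config lam a \<and> (legal_step lam)\<^sup>*\<^sup>* (\<lambda>v. cmax lam v + a v) c)}"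

definition Rec_min :: "nat list \<Rightarrow> (nat \<Rightarrow> nat) set" where
  "Rec_min lam = {c \<in> Rec lam. \<forall>d \<in> Rec lam. sum c {1..NF lam} \<le> sum d {1..NF lam}}"

fun canon_stage :: "nat list \<Rightarrow> (nat \<Rightarrow> nat) \<Rightarrow> nat \<Rightarrow> nat set \<times> (nat \<Rightarrow> nat)" where
  "canon_stage lam c 0 = ({0}, topple_set lam {0} c)"
| "canon_stage lam c (Suc k) =
     (let d = snd (canon_stage lam c k);
          S = {v. unstable_at lam d v \<and> v \<in> (if odd (Suc k) then colsF lam else rowsF lam)}
      in (S, topple_set lam S d))"

text \<open>The sequence of stages (U0, V1, U1, V2, ...); once a stage is empty, all later
  stages are empty, so the nonempty stages form the ordered set partition.\<close>
definition CanonTop :: "nat list \<Rightarrow> (nat \<Rightarrow> nat) \<Rightarrow> nat \<Rightarrow> nat set" where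
  "CanonTop lam c = (\<lambda>k. fst (canon_stage lam c k))"

end

theory Submission
  imports Defs
begin

text \<open>Let S = CanonTop c. When a vertex v topples in its stage it holds c v plus one grain
  from each neighbour toppled in an earlier stage, so c dominates the configuration
  c_S v = deg v - #(neighbours of v toppled before v), which depends on S only. Conversely
  c_S is recurrent: replaying S after a sink toppling topples every vertex once and so
  undoes it, and many sink topplings on top of c_S are reachable from a configuration above
  the maximal stable one. A minimal recurrent c therefore equals c_S.\<close>

definition nbr_count :: "nat list \<Rightarrow> nat set \<Rightarrow> nat \<Rightarrow> nat" where
  "nbr_count lam T v = card {u \<in> T. adjF lam u v}"

definition independent :: "nat list \<Rightarrow> nat set \<Rightarrow> bool" where
  "independent lam S \<longleftrightarrow> (\<forall>u\<in>S. \<forall>w\<in>S. \<not> adjF lam u w)"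

lemma adjF_sym: "adjF lam u v = adjF lam v u"
  unfolding adjF_def by auto

lemma adjF_irrefl: "\<not> adjF lam u u"
  unfolding adjF_def by auto

lemma adjF_le_NF: "adjF lam u v \<Longrightarrow> u \<le> NF lam \<and> v \<le> NF lam"
  unfolding adjF_def colsF_def by auto

lemma rowsF_colsF_disjoint: "v \<in> rowsF lam \<Longrightarrow> v \<notin> colsF lam"
  unfolding colsF_def by blast

lemma rowsF_or_colsF: "v \<le> NF lam \<Longrightarrow> v \<in> rowsF lam \<or> v \<in> colsF lam"
  unfolding colsF_def by auto

lemma not_adjF_rowsF: "u \<in> rowsF lam \<Longrightarrow> v \<in> rowsF lam \<Longrightarrow> \<not> adjF lam u v"
  unfolding adjF_def using rowsF_colsF_disjoint by blast

lemma not_adjF_colsF: "u \<in> colsF lam \<Longrightarrow> v \<in> colsF lam \<Longrightarrow> \<not> adjF lam u v"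
  unfolding adjF_def using rowsF_colsF_disjoint by blast

lemma finite_adjF_nbrs: "finite {u \<in> T. adjF lam u v}"
  by (rule finite_subset[of _ "{0..NF lam}"]) (auto dest: adjF_le_NF)

lemma degF_eq_nbr_count: "degF lam v = nbr_count lam {0..NF lam} v"
  unfolding degF_def nbr_count_def by simp

lemma nbr_count_le_degF: "nbr_count lam T v \<le> degF lam v"
  unfolding degF_eq_nbr_count nbr_count_def
  by (rule card_mono) (auto dest: adjF_le_NF intro: finite_adjF_nbrs)

lemma degF_le: "degF lam v \<le> NF lam + 1"
proof -
  have "degF lam v \<le> card {0..NF lam}" unfolding degF_def by (rule card_mono) auto
  then show ?thesis by simp
qed

lemma nbr_count_Un_disjoint:
  assumes "A \<inter> B = {}"
  shows "nbr_count lam (A \<union> B) v = nbr_count lam A v + nbr_count lam B v"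
proof -
  have "{u \<in> A \<union> B. adjF lam u v} = {u \<in> A. adjF lam u v} \<union> {u \<in> B. adjF lam u v}"
    "{u \<in> A. adjF lam u v} \<inter> {u \<in> B. adjF lam u v} = {}" using assms by auto
  then show ?thesis unfolding nbr_count_def by (simp add: card_Un_disjoint finite_adjF_nbrs)
qed

lemma nbr_count_empty [simp]: "nbr_count lam {} v = 0"
  unfolding nbr_count_def by simp

lemma nbr_count_singleton: "nbr_count lam {w} v = (if adjF lam w v then 1 else 0)"
proof -
  have "{u \<in> {w}. adjF lam u v} = (if adjF lam w v then {w} else {})" by auto
  then show ?thesis unfolding nbr_count_def by simp
qed

lemma nbr_count_independent:
  assumes "independent lam S" "v \<in> S"
  shows "nbr_count lam S v = 0"
proof -
  have "{u \<in> S. adjF lam u v} = {}" using assms unfolding independent_def by blast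
  then show ?thesis unfolding nbr_count_def by (simp only: card.empty)
qed

lemma topple_set_eq_nbr_count:
  "topple_set lam S c = (\<lambda>u. if u \<in> {1..NF lam}
      then (c u + nbr_count lam S u) - (if u \<in> S then degF lam u else 0) else 0)"
  unfolding topple_set_def nbr_count_def by simp

lemma topple_set_apply:
  "u \<in> {1..NF lam} \<Longrightarrow>
    topple_set lam S c u = (c u + nbr_count lam S u) - (if u \<in> S then degF lam u else 0)"
  unfolding topple_set_eq_nbr_count by simp

lemma topple_set_outside: "u \<notin> {1..NF lam} \<Longrightarrow> topple_set lam S c u = 0"
  unfolding topple_set_def by (simp only: if_False)

lemma is_config_topple_set: "is_config lam (topple_set lam S c)"
  unfolding is_config_def using topple_set_outside by blast

lemma topple_set_empty: "is_config lam c \<Longrightarrow> topple_set lam {} c = c"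
  unfolding topple_set_eq_nbr_count is_config_def by auto

lemma topple_set_insert:
  assumes "w \<notin> S" "independent lam (insert w S)" "\<forall>v\<in>insert w S. degF lam v \<le> c v"
  shows "topple_set lam (insert w S) c = topple_set lam {w} (topple_set lam S c)"
proof
  fix u
  have nbr_insert: "nbr_count lam (insert w S) u = nbr_count lam {w} u + nbr_count lam S u"
    using nbr_count_Un_disjoint[of "{w}" S lam u] assms(1) by simp
  show "topple_set lam (insert w S) c u = topple_set lam {w} (topple_set lam S c) u"
  proof (cases "u \<in> {1..NF lam}")
    case False
    then show ?thesis by (simp add: topple_set_outside)
  next
    case u: True
    show ?thesis
    proof (cases "u \<in> insert w S")
      case True
      then have "nbr_count lam (insert w S) u = 0"
        by (rule nbr_count_independent[OF assms(2)])
      moreover have "degF lam u \<le> c u" using assms(3) True by blast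
      ultimately show ?thesis
        using u True assms(1) nbr_insert by (auto simp: topple_set_apply)
    next
      case False
      then show ?thesis using u nbr_insert by (simp add: topple_set_apply)
    qed
  qed
qed

lemma legal_steps_topple_independent:
  assumes "finite S" "S \<subseteq> {1..NF lam}" "independent lam S"
    and "\<forall>v\<in>S. degF lam v \<le> c v" "is_config lam c"
  shows "(legal_step lam)\<^sup>*\<^sup>* c (topple_set lam S c)"
  using assms
proof (induction S rule: finite_induct)
  case empty
  then show ?case by (simp add: topple_set_empty)
next
  case (insert w S)
  have "independent lam S" using insert.prems(2) unfolding independent_def by blast
  then have IH: "(legal_step lam)\<^sup>*\<^sup>* c (topple_set lam S c)" using insert by blast
  have w: "w \<in> {1..NF lam}" using insert.prems(1) by blast
  have "nbr_count lam (insert w S) w = 0"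
    using insert.prems(2) by (rule nbr_count_independent) simp
  then have "nbr_count lam S w = 0"
    using nbr_count_Un_disjoint[of "{w}" S lam w] insert.hyps(2) by simp
  then have "topple_set lam S c w = c w" using w insert.hyps(2) by (simp add: topple_set_apply)
  then have "unstable_at lam (topple_set lam S c) w"
    unfolding unstable_at_def using w insert.prems(3) by simp
  then have "legal_step lam (topple_set lam S c) (topple_set lam {w} (topple_set lam S c))"
    unfolding legal_step_def by blast
  then show ?case
    using IH topple_set_insert[OF insert.hyps(2) insert.prems(2,3)] by simp
qed

section \<open>Forbidden subconfigurations\<close>

definition forbidden :: "nat list \<Rightarrow> (nat \<Rightarrow> nat) \<Rightarrow> nat set \<Rightarrow> bool" where
  "forbidden lam c W \<longleftrightarrow>
     W \<noteq> {} \<and> W \<subseteq> {1..NF lam} \<and> (\<forall>v\<in>W. c v < nbr_count lam W v)"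

lemma forbidden_legal_step:
  assumes "legal_step lam c d" "forbidden lam d W"
  shows "\<exists>W'. forbidden lam c W'"
proof -
  obtain u where u: "unstable_at lam c u" "d = topple_set lam {u} c"
    using assms(1) unfolding legal_step_def by blast
  have W: "W \<noteq> {}" "W \<subseteq> {1..NF lam}" "\<forall>v\<in>W. d v < nbr_count lam W v"
    using assms(2) unfolding forbidden_def by auto
  have d_other: "d v = c v + nbr_count lam {u} v" if "v \<in> W" "v \<noteq> u" for v
    using that W(2) u(2) by (auto simp: topple_set_apply)
  show ?thesis
  proof (cases "u \<in> W")
    case False
    then have "forbidden lam c W"
      using W d_other unfolding forbidden_def by fastforce
    then show ?thesis by blast
  next
    case True
    have split_W: "nbr_count lam W v = nbr_count lam {u} v + nbr_count lam (W - {u}) v" for v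
      using nbr_count_Un_disjoint[of "{u}" "W - {u}" lam v] True by (simp add: insert_absorb)
    have "W - {u} \<noteq> {}"
    proof
      assume "W - {u} = {}"
      then have "W = {u}" using True by blast
      then have "d u < nbr_count lam {u} u" using W(3) by blast
      then show False by (simp add: nbr_count_singleton adjF_irrefl)
    qed
    moreover have "c v < nbr_count lam (W - {u}) v" if "v \<in> W - {u}" for v
      using that W(3) d_other split_W[of v] by fastforce
    ultimately have "forbidden lam c (W - {u})"
      using W(2) unfolding forbidden_def by blast
    then show ?thesis by blast
  qed
qed

lemma forbidden_legal_steps:
  assumes "(legal_step lam)\<^sup>*\<^sup>* c d" "forbidden lam d W"
  shows "\<exists>W'. forbidden lam c W'"
  using assms
proof (induction arbitrary: W rule: converse_rtranclp_induct)
  case base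
  then show ?case by blast
next
  case (step c e)
  then show ?case using forbidden_legal_step by blast
qed

section \<open>Toppling schedules\<close>

fun stage_config ::
  "nat list \<Rightarrow> (nat \<Rightarrow> nat set) \<Rightarrow> (nat \<Rightarrow> nat) \<Rightarrow> nat \<Rightarrow> (nat \<Rightarrow> nat)" where
  "stage_config lam S c 0 = topple_set lam {0} c"
| "stage_config lam S c (Suc k) = topple_set lam (S (Suc k)) (stage_config lam S c k)"

definition toppled :: "(nat \<Rightarrow> nat set) \<Rightarrow> nat \<Rightarrow> nat set" where
  "toppled S k = (\<Union>i\<le>k. S i)"

definition schedule :: "nat list \<Rightarrow> (nat \<Rightarrow> nat set) \<Rightarrow> bool" where
  "schedule lam S \<longleftrightarrow>
     S 0 = {0} \<and> (\<forall>j. S (Suc j) \<subseteq> {1..NF lam} \<and> independent lam (S (Suc j)))"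

definition legal_stage :: "nat list \<Rightarrow> (nat \<Rightarrow> nat set) \<Rightarrow> (nat \<Rightarrow> nat) \<Rightarrow> nat \<Rightarrow> bool" where
  "legal_stage lam S c j \<longleftrightarrow>
     S (Suc j) \<inter> toppled S j = {} \<and> (\<forall>v\<in>S (Suc j). degF lam v \<le> stage_config lam S c j v)"

lemma toppled_0 [simp]: "toppled S 0 = S 0"
  unfolding toppled_def by simp

lemma toppled_Suc: "toppled S (Suc k) = toppled S k \<union> S (Suc k)"
  unfolding toppled_def by (simp add: atMost_Suc Un_commute)

lemma stage_subset_toppled: "i \<le> k \<Longrightarrow> S i \<subseteq> toppled S k"
  unfolding toppled_def by auto

lemma toppled_subset:
  assumes "schedule lam S"
  shows "toppled S k \<subseteq> {0..NF lam}"
proof (induction k)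
  case (Suc k)
  have "S (Suc k) \<subseteq> {1..NF lam}" using assms unfolding schedule_def by blast
  then show ?case using Suc unfolding toppled_Suc by auto
qed (use assms in \<open>simp add: schedule_def\<close>)

lemma zero_in_toppled: "schedule lam S \<Longrightarrow> 0 \<in> toppled S k"
  using stage_subset_toppled[of 0 k S] unfolding schedule_def by auto

lemma is_config_stage_config: "is_config lam (stage_config lam S c k)"
  by (cases k) (simp_all add: is_config_topple_set)

lemma stage_config_balance:
  assumes "schedule lam S" "\<forall>j<k. legal_stage lam S c j" "v \<in> {1..NF lam}"
  shows "stage_config lam S c k v + (if v \<in> toppled S k then degF lam v else 0)
           = c v + nbr_count lam (toppled S k) v"
  using assms(2)
proof (induction k)
  case 0
  have "v \<noteq> 0" using assms(3) by simp
  then show ?case using assms(1,3) by (simp add: schedule_def topple_set_apply)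
next
  case (Suc k)
  have IH: "stage_config lam S c k v + (if v \<in> toppled S k then degF lam v else 0)
              = c v + nbr_count lam (toppled S k) v"
    using Suc by simp
  have disj: "S (Suc k) \<inter> toppled S k = {}"
    and legal: "\<forall>u\<in>S (Suc k). degF lam u \<le> stage_config lam S c k u"
    using Suc.prems unfolding legal_stage_def by auto
  have nbr: "nbr_count lam (toppled S (Suc k)) v
               = nbr_count lam (toppled S k) v + nbr_count lam (S (Suc k)) v"
    unfolding toppled_Suc using disj by (intro nbr_count_Un_disjoint) blast
  show ?case
  proof (cases "v \<in> S (Suc k)")
    case True
    have "nbr_count lam (S (Suc k)) v = 0"
      using assms(1) True unfolding schedule_def by (blast intro: nbr_count_independent)
    moreover have "v \<notin> toppled S k" using disj True by blast
    ultimately show ?thesis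
      using IH nbr legal True assms(3) by (auto simp: toppled_Suc topple_set_apply)
  next
    case False
    then show ?thesis using IH nbr assms(3) by (auto simp: toppled_Suc topple_set_apply)
  qed
qed

lemma legal_steps_stage_config:
  assumes "schedule lam S" "\<forall>j<k. legal_stage lam S c j"
  shows "(legal_step lam)\<^sup>*\<^sup>* (stage_config lam S c 0) (stage_config lam S c k)"
  using assms(2)
proof (induction k)
  case 0
  then show ?case by simp
next
  case (Suc k)
  have stage: "S (Suc k) \<subseteq> {1..NF lam}" "independent lam (S (Suc k))"
    using assms(1) unfolding schedule_def by blast+
  have "(legal_step lam)\<^sup>*\<^sup>* (stage_config lam S c k)
          (topple_set lam (S (Suc k)) (stage_config lam S c k))"
    using Suc.prems stage finite_subset[OF stage(1)] is_config_stage_config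
    by (intro legal_steps_topple_independent) (auto simp: legal_stage_def)
  then show ?case using Suc by simp
qed

lemma stage_config_toppled_all:
  assumes "schedule lam S" "\<forall>j<k. legal_stage lam S c j"
    and "toppled S k = {0..NF lam}" "is_config lam c"
  shows "stage_config lam S c k = c"
proof
  fix v
  show "stage_config lam S c k v = c v"
  proof (cases "v \<in> {1..NF lam}")
    case True
    then show ?thesis
      using stage_config_balance[OF assms(1,2) True] assms(3) by (simp add: degF_eq_nbr_count)
  next
    case False
    then show ?thesis
      using is_config_stage_config assms(4) unfolding is_config_def by metis
  qed
qed

lemma stage_config_CanonTop: "snd (canon_stage lam c k) = stage_config lam (CanonTop lam c) c k"
  by (induction k) (simp_all add: CanonTop_def Let_def)

lemma CanonTop_0: "CanonTop lam c 0 = {0}"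
  unfolding CanonTop_def by simp

lemma CanonTop_Suc:
  "CanonTop lam c (Suc k) =
     {v. unstable_at lam (stage_config lam (CanonTop lam c) c k) v \<and>
         v \<in> (if odd (Suc k) then colsF lam else rowsF lam)}"
  unfolding CanonTop_def by (simp add: Let_def stage_config_CanonTop[unfolded CanonTop_def])

lemma schedule_CanonTop: "schedule lam (CanonTop lam c)"
  unfolding schedule_def independent_def CanonTop_Suc unstable_at_def
  using CanonTop_0 not_adjF_colsF not_adjF_rowsF by auto

text \<open>After its first toppling a vertex has lost deg v grains and received at most deg v,
  so it holds at most c v < deg v and cannot topple again.\<close>
lemma legal_stage_CanonTop:
  assumes "stable lam c"
  shows "legal_stage lam (CanonTop lam c) c k"
proof (induction k rule: less_induct)
  case (less k)
  let ?S = "CanonTop lam c"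
  have unstable: "degF lam v \<le> stage_config lam ?S c k v" if "v \<in> ?S (Suc k)" for v
    using that unfolding CanonTop_Suc unstable_at_def by blast
  have "v \<notin> toppled ?S k" if v: "v \<in> ?S (Suc k)" for v
  proof
    assume "v \<in> toppled ?S k"
    moreover have v_range: "v \<in> {1..NF lam}"
      using v schedule_CanonTop unfolding schedule_def by blast
    moreover have "\<forall>j<k. legal_stage lam ?S c j" using less by blast
    ultimately have "stage_config lam ?S c k v + degF lam v = c v + nbr_count lam (toppled ?S k) v"
      using stage_config_balance[OF schedule_CanonTop, of k lam c c v] by simp
    moreover have "c v < degF lam v" using assms v_range unfolding stable_def by blast
    ultimately show False
      using unstable[OF v] nbr_count_le_degF[of lam "toppled ?S k" v] by linarith
  qed
  then show ?case unfolding legal_stage_def using unstable by blast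
qed

definition stage_index :: "(nat \<Rightarrow> nat set) \<Rightarrow> nat \<Rightarrow> nat" where
  "stage_index S v = (LEAST j. v \<in> S (Suc j))"

text \<open>This is c_S of the header. For a vertex in no stage, stage_index is a junk value.\<close>
definition least_config :: "nat list \<Rightarrow> (nat \<Rightarrow> nat set) \<Rightarrow> nat \<Rightarrow> nat" where
  "least_config lam S v =
     (if v \<in> {1..NF lam} then degF lam v - nbr_count lam (toppled S (stage_index S v)) v else 0)"

lemma stage_index_eq:
  assumes "\<forall>i. S (Suc i) \<inter> toppled S i = {}" "v \<in> S (Suc j)"
  shows "stage_index S v = j"
proof (rule ccontr)
  assume "stage_index S v \<noteq> j"
  moreover have "stage_index S v \<le> j" unfolding stage_index_def using assms(2) by (rule Least_le)
  ultimately have "S (Suc (stage_index S v)) \<subseteq> toppled S j" by (intro stage_subset_toppled) simp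
  moreover have "v \<in> S (Suc (stage_index S v))" unfolding stage_index_def using assms(2) by (rule LeastI)
  ultimately show False using assms by blast
qed

lemma least_config_eq:
  assumes "\<forall>i. S (Suc i) \<inter> toppled S i = {}" "v \<in> S (Suc j)" "v \<in> {1..NF lam}"
  shows "least_config lam S v = degF lam v - nbr_count lam (toppled S j) v"
  using assms unfolding least_config_def by (simp add: stage_index_eq)

lemma least_config_le:
  assumes "schedule lam S" "\<forall>i. legal_stage lam S c i" "v \<in> S (Suc j)"
  shows "least_config lam S v \<le> c v"
proof -
  have disj: "\<forall>i. S (Suc i) \<inter> toppled S i = {}" using assms(2) unfolding legal_stage_def by blast
  have v: "v \<in> {1..NF lam}" using assms(1,3) unfolding schedule_def by blast
  have "v \<notin> toppled S j" using disj assms(3) by blast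
  then have "stage_config lam S c j v = c v + nbr_count lam (toppled S j) v"
    using stage_config_balance[OF assms(1), of j c v] assms(2) v by simp
  moreover have "degF lam v \<le> stage_config lam S c j v"
    using assms(2,3) unfolding legal_stage_def by blast
  ultimately show ?thesis using least_config_eq[OF disj assms(3) v] by linarith
qed

text \<open>Replaying S topples every vertex exactly once, which undoes the sink toppling.\<close>
lemma legal_steps_undo_sink:
  assumes S: "schedule lam S" "\<forall>i. S (Suc i) \<inter> toppled S i = {}" "toppled S K = {0..NF lam}"
    and g: "is_config lam g" "\<forall>v\<in>{1..NF lam}. least_config lam S v \<le> g v"
  shows "(legal_step lam)\<^sup>*\<^sup>* (topple_set lam {0} g) g"
proof -
  have legal: "legal_stage lam S g j" for j
  proof (induction j rule: less_induct)
    case (less j)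
    have "degF lam v \<le> stage_config lam S g j v" if v: "v \<in> S (Suc j)" for v
    proof -
      have v_range: "v \<in> {1..NF lam}" using v S(1) unfolding schedule_def by blast
      have "v \<notin> toppled S j" using S(2) v by blast
      then have "stage_config lam S g j v = g v + nbr_count lam (toppled S j) v"
        using stage_config_balance[OF S(1), of j g v] less v_range by simp
      then show ?thesis
        using least_config_eq[OF S(2) v v_range] g(2) v_range nbr_count_le_degF[of lam _ v]
        by fastforce
    qed
    then show ?case unfolding legal_stage_def using S(2) by blast
  qed
  have "(legal_step lam)\<^sup>*\<^sup>* (stage_config lam S g 0) (stage_config lam S g K)"
    using legal_steps_stage_config[OF S(1)] legal by blast
  then show ?thesis using stage_config_toppled_all[OF S(1) _ S(3) g(1)] legal by simp
qed

lemma funpow_topple_sink: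
  assumes "is_config lam f"
  shows "(topple_set lam {0} ^^ m) f =
           (\<lambda>u. if u \<in> {1..NF lam} then f u + m * (if adjF lam 0 u then 1 else 0) else 0)"
proof (induction m)
  case 0
  then show ?case using assms unfolding is_config_def by auto
next
  case (Suc m)
  show ?case
  proof
    fix u
    show "(topple_set lam {0} ^^ Suc m) f u =
            (if u \<in> {1..NF lam} then f u + Suc m * (if adjF lam 0 u then 1 else 0) else 0)"
      using Suc by (cases "u \<in> {1..NF lam}")
        (auto simp: topple_set_apply topple_set_outside nbr_count_singleton)
  qed
qed

section \<open>Ferrers graphs\<close>

text \<open>Toppling the non-sink rows once gives every column the grains of all its neighbours
  but the sink, which is what K sink topplings add to f; rows are not adjacent to the sink.\<close>
definition sink_preimage :: "nat list \<Rightarrow> (nat \<Rightarrow> nat) \<Rightarrow> nat \<Rightarrow> nat \<Rightarrow> nat" where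
  "sink_preimage lam f K u = (if u \<in> {1..NF lam} then
      (if u \<in> rowsF lam then f u + degF lam u else f u + K + 1 - degF lam u) else 0)"

locale ferrers_diagram =
  fixes lam :: "nat list"
  assumes ferrers: "ferrers lam"
begin

abbreviation "N \<equiv> NF lam"

lemma rowsF_less_NF: "r \<in> rowsF lam \<Longrightarrow> r < N"
proof -
  assume "r \<in> rowsF lam"
  then obtain i where i: "i < length lam" "r = i + (hd lam - lam ! i)"
    unfolding rowsF_def by blast
  have "0 < lam ! i" "0 < hd lam" "lam \<noteq> []"
    using ferrers i(1) unfolding ferrers_def by auto
  then show ?thesis using i unfolding NF_def by linarith
qed

lemma zero_in_rowsF: "0 \<in> rowsF lam"
  using ferrers unfolding rowsF_def ferrers_def by (cases lam) auto

lemma NF_in_colsF: "N \<in> colsF lam"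
  unfolding colsF_def using rowsF_less_NF by fastforce

lemma adjF_0_colsF: "v \<in> colsF lam \<Longrightarrow> adjF lam 0 v"
  unfolding adjF_def using zero_in_rowsF rowsF_colsF_disjoint by (cases v) auto

lemma adjF_rowsF_NF: "v \<in> rowsF lam \<Longrightarrow> adjF lam v N"
  unfolding adjF_def using NF_in_colsF rowsF_less_NF by simp

text \<open>A forbidden set W of a configuration at least the maximal stable one must contain
  every neighbour of its vertices; since G(F) is connected, W would contain the sink.\<close>
lemma not_forbidden_ge_cmax:
  assumes "\<forall>v. cmax lam v \<le> c v"
  shows "\<not> forbidden lam c W"
proof
  assume "forbidden lam c W"
  then have W: "W \<noteq> {}" "W \<subseteq> {1..N}" "\<forall>v\<in>W. c v < nbr_count lam W v"
    unfolding forbidden_def by auto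
  have closed: "w \<in> W" if v: "v \<in> W" and w: "adjF lam w v" for v w
  proof -
    have "cmax lam v = degF lam v - 1" using v W(2) unfolding cmax_def by auto
    moreover have "c v < nbr_count lam W v" using W(3) v by blast
    ultimately have "degF lam v - 1 < nbr_count lam W v"
      using assms[rule_format, of v] by linarith
    then have "nbr_count lam W v = nbr_count lam {0..N} v"
      using nbr_count_le_degF[of lam W v] unfolding degF_eq_nbr_count by linarith
    moreover have "{u \<in> W. adjF lam u v} \<subseteq> {u \<in> {0..N}. adjF lam u v}" using W(2) by auto
    ultimately have "{u \<in> W. adjF lam u v} = {u \<in> {0..N}. adjF lam u v}"
      unfolding nbr_count_def by (metis card_subset_eq finite_adjF_nbrs)
    moreover have "w \<in> {u \<in> {0..N}. adjF lam u v}" using w adjF_le_NF by simp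
    ultimately show "w \<in> W" by blast
  qed
  obtain v where v: "v \<in> W" using W(1) by blast
  have "N \<in> W"
  proof (cases "v \<in> colsF lam")
    case True
    then have "0 \<in> W" using closed[OF v adjF_0_colsF] by blast
    then show ?thesis using W(2) by auto
  next
    case False
    then have "v \<in> rowsF lam" using rowsF_or_colsF[of v lam] v W(2) by auto
    then have "adjF lam N v" using adjF_rowsF_NF adjF_sym by metis
    then show ?thesis using closed[OF v] by blast
  qed
  then have "0 \<in> W" using closed adjF_0_colsF[OF NF_in_colsF] by simp
  then show False using W(2) by auto
qed

lemma Rec_not_forbidden:
  assumes "c \<in> Rec lam"
  shows "\<not> forbidden lam c W"
proof
  assume "forbidden lam c W"
  obtain a where "(legal_step lam)\<^sup>*\<^sup>* (\<lambda>v. cmax lam v + a v) c"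
    using assms unfolding Rec_def by blast
  then obtain W' where "forbidden lam (\<lambda>v. cmax lam v + a v) W'"
    using forbidden_legal_steps \<open>forbidden lam c W\<close> by blast
  then show False using not_forbidden_ge_cmax[of "\<lambda>v. cmax lam v + a v"] by simp
qed

text \<open>After two consecutive empty stages every vertex is stable, so the vertices that
  never toppled form a forbidden set.\<close>
lemma CanonTop_empty_stages_toppled_all:
  assumes c: "c \<in> Rec lam"
    and empty: "CanonTop lam c (Suc k) = {}" "CanonTop lam c (Suc (Suc k)) = {}"
  shows "toppled (CanonTop lam c) k = {0..N}"
proof -
  let ?S = "CanonTop lam c"
  let ?T = "toppled ?S k"
  let ?W = "{1..N} - ?T"
  have stable: "stable lam c" using c unfolding Rec_def by blast
  have T: "?T \<subseteq> {0..N}" "0 \<in> ?T"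
    using toppled_subset zero_in_toppled schedule_CanonTop by blast+
  have T_W: "?T \<union> ?W = {0..N}"
  proof (rule set_eqI)
    fix x
    show "x \<in> ?T \<union> ?W \<longleftrightarrow> x \<in> {0..N}" using T by (cases "x = 0") auto
  qed
  have "c v < nbr_count lam ?W v" if v: "v \<in> ?W" for v
  proof -
    have "stage_config lam ?S c k v < degF lam v"
    proof (cases "v \<in> (if odd (Suc k) then colsF lam else rowsF lam)")
      case True
      then have "\<not> unstable_at lam (stage_config lam ?S c k) v"
        using empty(1) unfolding CanonTop_Suc by blast
      then show ?thesis using v unfolding unstable_at_def by auto
    next
      case False
      then have "v \<in> (if odd (Suc (Suc k)) then colsF lam else rowsF lam)"
        using rowsF_or_colsF[of v lam] v by auto
      then have "\<not> unstable_at lam (stage_config lam ?S c (Suc k)) v"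
        using empty(2) unfolding CanonTop_Suc by blast
      moreover have "stage_config lam ?S c (Suc k) = stage_config lam ?S c k"
        using empty(1) topple_set_empty[OF is_config_stage_config] by simp
      ultimately show ?thesis using v unfolding unstable_at_def by auto
    qed
    moreover have "stage_config lam ?S c k v = c v + nbr_count lam ?T v"
      using stage_config_balance[OF schedule_CanonTop, of k lam c c v] v
        legal_stage_CanonTop[OF stable] by simp
    moreover have "degF lam v = nbr_count lam ?T v + nbr_count lam ?W v"
      using nbr_count_Un_disjoint[of ?T ?W lam v] unfolding degF_eq_nbr_count T_W by blast
    ultimately show ?thesis by linarith
  qed
  then have "?W = {}" using Rec_not_forbidden[OF c, of ?W] unfolding forbidden_def by blast
  then show ?thesis using T_W by (simp add: Un_absorb2)
qed

text \<open>Without two consecutive empty stages the set of toppled vertices grows every two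
  stages, which can happen only N + 1 times.\<close>
lemma CanonTop_toppled_all:
  assumes c: "c \<in> Rec lam"
  shows "\<exists>K. toppled (CanonTop lam c) K = {0..N}"
proof (rule ccontr)
  let ?S = "CanonTop lam c"
  assume none: "\<nexists>K. toppled ?S K = {0..N}"
  have stable: "stable lam c" using c unfolding Rec_def by blast
  have grow: "card (toppled ?S k) < card (toppled ?S (Suc (Suc k)))" for k
  proof -
    have "?S (Suc k) \<noteq> {} \<or> ?S (Suc (Suc k)) \<noteq> {}"
      using CanonTop_empty_stages_toppled_all[OF c] none by blast
    moreover have "?S (Suc k) \<inter> toppled ?S k = {}" "?S (Suc (Suc k)) \<inter> toppled ?S (Suc k) = {}"
      using legal_stage_CanonTop[OF stable] unfolding legal_stage_def by blast+
    moreover have "toppled ?S (Suc (Suc k)) = toppled ?S k \<union> ?S (Suc k) \<union> ?S (Suc (Suc k))"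
      by (simp add: toppled_Suc)
    ultimately have "toppled ?S k \<subset> toppled ?S (Suc (Suc k))"
      using toppled_Suc by blast
    moreover have "finite (toppled ?S (Suc (Suc k)))"
      using finite_subset[OF toppled_subset[OF schedule_CanonTop]] by blast
    ultimately show ?thesis by (rule psubset_card_mono[rotated])
  qed
  have "m \<le> card (toppled ?S (2 * m))" for m
  proof (induction m)
    case (Suc m)
    then show ?case using grow[of "2 * m"] by simp
  qed simp
  then have "N + 2 \<le> card (toppled ?S (2 * (N + 2)))" .
  moreover have "card (toppled ?S (2 * (N + 2))) \<le> card {0..N}"
    using toppled_subset[OF schedule_CanonTop] by (intro card_mono) auto
  ultimately show False by simp
qed

lemma CanonTop_topples:
  assumes c: "c \<in> Rec lam" and v: "v \<in> {1..N}"
  obtains j where "v \<in> CanonTop lam c (Suc j)"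
proof -
  obtain K where "toppled (CanonTop lam c) K = {0..N}" using CanonTop_toppled_all[OF c] by blast
  then have "v \<in> toppled (CanonTop lam c) K" using v by simp
  then obtain i where i: "v \<in> CanonTop lam c i" unfolding toppled_def by blast
  moreover have "i \<noteq> 0" using i v by (cases i) (auto simp: CanonTop_0)
  ultimately show ?thesis using that by (cases i) auto
qed

lemma least_config_CanonTop_le:
  assumes c: "c \<in> Rec lam" and v: "v \<in> {1..N}"
  shows "least_config lam (CanonTop lam c) v \<le> c v"
proof -
  have "stable lam c" using c unfolding Rec_def by blast
  obtain j where "v \<in> CanonTop lam c (Suc j)" using CanonTop_topples[OF c v] .
  then show ?thesis
    using least_config_le[OF schedule_CanonTop] legal_stage_CanonTop[OF \<open>stable lam c\<close>] by blast
qed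

lemma nbr_count_nonsink_rows:
  assumes u: "u \<in> colsF lam"
  shows "nbr_count lam (rowsF lam - {0}) u + 1 = degF lam u"
proof -
  have "{w \<in> rowsF lam - {0}. adjF lam w u} = {w \<in> {0..N}. adjF lam w u} - {0}"
  proof (rule set_eqI)
    fix w
    show "w \<in> {w \<in> rowsF lam - {0}. adjF lam w u} \<longleftrightarrow> w \<in> {w \<in> {0..N}. adjF lam w u} - {0}"
      using u rowsF_or_colsF[of w lam] not_adjF_colsF[of w lam u] adjF_le_NF[of lam w u] by auto
  qed
  moreover have "0 \<in> {w \<in> {0..N}. adjF lam w u}" using adjF_0_colsF[OF u] by simp
  ultimately show ?thesis
    unfolding nbr_count_def degF_eq_nbr_count by (metis Suc_eq_plus1 card.remove finite_adjF_nbrs)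
qed

lemma topple_nonsink_rows_sink_preimage:
  assumes f: "is_config lam f" and K: "N \<le> K"
  shows "topple_set lam (rowsF lam - {0}) (sink_preimage lam f K) = (topple_set lam {0} ^^ K) f"
    (is "topple_set lam ?R ?z = _")
proof
  fix u
  show "topple_set lam ?R ?z u = (topple_set lam {0} ^^ K) f u"
  proof (cases "u \<in> {1..N}")
    case False
    then show ?thesis
      by (simp only: funpow_topple_sink[OF f] topple_set_outside[OF False] if_not_P[OF False] if_False)
  next
    case u: True
    show ?thesis
    proof (cases "u \<in> rowsF lam")
      case True
      moreover have "\<not> adjF lam 0 u" using not_adjF_rowsF[OF zero_in_rowsF True] .
      moreover have "nbr_count lam ?R u = 0"
        using u True not_adjF_rowsF by (intro nbr_count_independent) (auto simp: independent_def)
      ultimately show ?thesis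
        using u by (simp add: funpow_topple_sink[OF f] topple_set_apply sink_preimage_def)
    next
      case False
      then have col: "u \<in> colsF lam" using u rowsF_or_colsF[of u lam] by auto
      have "?z u = f u + K + 1 - degF lam u" using u False by (simp add: sink_preimage_def)
      then have "topple_set lam ?R ?z u = f u + K"
        using u False nbr_count_nonsink_rows[OF col] degF_le[of lam u] K
        by (simp add: topple_set_apply)
      then show ?thesis using u adjF_0_colsF[OF col] by (simp add: funpow_topple_sink[OF f])
    qed
  qed
qed

lemma sink_topplings_reachable:
  assumes f: "is_config lam f" and K: "2 * N \<le> K"
  shows "\<exists>a. is_config lam a \<and>
           (legal_step lam)\<^sup>*\<^sup>* (\<lambda>v. cmax lam v + a v) ((topple_set lam {0} ^^ K) f)"
proof -
  let ?z = "sink_preimage lam f K"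
  let ?R = "rowsF lam - {0}"
  have R: "?R \<subseteq> {1..N}" "independent lam ?R"
    unfolding independent_def using not_adjF_rowsF by (auto dest: rowsF_less_NF)
  have "(legal_step lam)\<^sup>*\<^sup>* ?z (topple_set lam ?R ?z)"
    using R finite_subset[OF R(1)]
    by (intro legal_steps_topple_independent) (auto simp: sink_preimage_def is_config_def)
  then have reach: "(legal_step lam)\<^sup>*\<^sup>* ?z ((topple_set lam {0} ^^ K) f)"
    using topple_nonsink_rows_sink_preimage[OF f] K by simp
  define a where "a u = ?z u - cmax lam u" for u
  have "cmax lam u \<le> ?z u" for u
    using degF_le[of lam u] K unfolding sink_preimage_def cmax_def by auto
  then have "(\<lambda>v. cmax lam v + a v) = ?z" unfolding a_def by auto
  moreover have "is_config lam a" unfolding is_config_def a_def sink_preimage_def cmax_def by auto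
  ultimately show ?thesis using reach by auto
qed

lemma least_config_CanonTop_Rec:
  assumes c: "c \<in> Rec lam"
  shows "least_config lam (CanonTop lam c) \<in> Rec lam"
proof -
  let ?S = "CanonTop lam c"
  let ?f = "least_config lam ?S"
  have stable: "stable lam c" using c unfolding Rec_def by blast
  have f_config: "is_config lam ?f" unfolding is_config_def least_config_def by auto
  have "stable lam ?f"
    using least_config_CanonTop_le[OF c] stable unfolding stable_def by (meson le_less_trans)
  obtain K where K: "toppled ?S K = {0..N}" using CanonTop_toppled_all[OF c] by blast
  have disj: "\<forall>i. ?S (Suc i) \<inter> toppled ?S i = {}"
    using legal_stage_CanonTop[OF stable] unfolding legal_stage_def by blast
  have "(legal_step lam)\<^sup>*\<^sup>* ((topple_set lam {0} ^^ m) ?f) ?f" for m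
  proof (induction m)
    case (Suc m)
    have "is_config lam ((topple_set lam {0} ^^ m) ?f)"
      "\<forall>v\<in>{1..N}. ?f v \<le> (topple_set lam {0} ^^ m) ?f v"
      unfolding funpow_topple_sink[OF f_config] is_config_def by auto
    then have "(legal_step lam)\<^sup>*\<^sup>* ((topple_set lam {0} ^^ Suc m) ?f) ((topple_set lam {0} ^^ m) ?f)"
      using legal_steps_undo_sink[OF schedule_CanonTop disj K] by simp
    then show ?case using Suc by simp
  qed simp
  moreover obtain a where "is_config lam a"
    "(legal_step lam)\<^sup>*\<^sup>* (\<lambda>v. cmax lam v + a v) ((topple_set lam {0} ^^ (2 * N)) ?f)"
    using sink_topplings_reachable[OF f_config] by blast
  ultimately show ?thesis
    unfolding Rec_def using f_config \<open>stable lam ?f\<close> by (blast intro: rtranclp_trans)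
qed

lemma Rec_min_eq_least_config:
  assumes c: "c \<in> Rec_min lam"
  shows "c = least_config lam (CanonTop lam c)"
proof -
  let ?f = "least_config lam (CanonTop lam c)"
  have c_Rec: "c \<in> Rec lam" using c unfolding Rec_min_def by blast
  have le: "\<forall>v\<in>{1..N}. ?f v \<le> c v" using least_config_CanonTop_le[OF c_Rec] by blast
  have "sum c {1..N} \<le> sum ?f {1..N}"
    using c least_config_CanonTop_Rec[OF c_Rec] unfolding Rec_min_def by blast
  moreover have "sum ?f {1..N} \<le> sum c {1..N}" using le by (intro sum_mono) blast
  ultimately have sum_eq: "sum ?f {1..N} = sum c {1..N}" by simp
  show ?thesis
  proof
    fix v
    show "c v = ?f v"
    proof (cases "v \<in> {1..N}")
      case True
      then show ?thesis using sum_mono_inv[of ?f "{1..N}" c v] le sum_eq by fastforce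
    next
      case False
      then have "c v = 0" using c_Rec unfolding Rec_def is_config_def by blast
      moreover have "?f v = 0" unfolding least_config_def by (simp only: if_not_P[OF False])
      ultimately show ?thesis by simp
    qed
  qed
qed

end

theorem theorem3p6:
  fixes lam :: "nat list" and c c' :: "nat \<Rightarrow> nat"
  assumes "ferrers lam"
    and "c \<in> Rec_min lam" and "c' \<in> Rec_min lam"
  shows "CanonTop lam c = CanonTop lam c' \<longleftrightarrow> c = c'"
proof
  interpret ferrers_diagram lam by (rule ferrers_diagram.intro) (rule assms(1))
  assume "CanonTop lam c = CanonTop lam c'"
  then show "c = c'"
    using Rec_min_eq_least_config[OF assms(2)] Rec_min_eq_least_config[OF assms(3)] by simp
qed simp

end
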